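(* Let $W$ be a real $N\times N$ matrix with singular value decomposition $W=U\Sigma V^\top$ and singular values $\sigma_1\ge\cdots\ge\sigma_N\ge0$, let $1\le n<N$, and let $V_n$ be the $N\times n$ matrix of the first $n$ right singular vectors of $W$ (first $n$ columns of $V$). Let $g:\mathbb{R}^N\times\mathbb{R}^N\to\mathbb{R}^N$ be continuously differentiable, with Jacobian matrices $J_x(x,y)=\big(\partial g_i/\partial x_j\big)_{i,j}$ and $J_y(x,y)=\big(\partial g_i/\partial y_j\big)_{i,j}$. Consider the complete dynamics $\dot x=g(x,Wx)$ and the reduced dynamics $\dot X=Mg(M^+X,WM^+X)$ with $M=V_n^\top$, and define the alignment error at $x\in\mathbb{R}^N$ by \[\mathcal{E}(x)=\frac{1}{\sqrt n}\big\|Mg(x,Wx)-Mg(M^+Mx,WM^+Mx)\big\|.\] Then for every $x\in\mathbb{R}^N$ there is a point $x'$ on the segment between $x$ and $V_nV_n^\top x$ such that, with $y'=Wx'$, \[\mathcal{E}(x)\le\frac{1}{\sqrt n}\Big[\big\|V_n^\top J_x(x',y')(I-V_nV_n^\top)x\big\|+\sigma_{n+1}\big\|V_n^\top J_y(x',y')\big\|_2\,\|x\|\Big].\] Moreover, for any $x\neq0$, \[\frac{\mathcal{E}(x)}{\|x\|}\le\frac{1}{\sqrt n}\Big[\alpha(x',y')+\sigma_{n+1}\beta(x',y')\Big],\] where $\alpha(x',y')=\sigma_1(J_x(x',y'))$ and $\beta(x',y')=\sigma_1(J_y(x',y'))$ are the largest singular values of the Jacobians.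
   Context: $\|\cdot\|$ is the Euclidean vector norm, $\|\cdot\|_2$ the spectral matrix norm, $M^+$ the Moore–Penrose pseudoinverse of $M$. *)

theory Defs
  imports "HOL-Analysis.Analysis"
begin

definition pinv :: "real^'m^'n \<Rightarrow> real^'n^'m" where
  "pinv A = (THE B. A ** B ** A = A \<and> B ** A ** B = B \<and>
                    transpose (A ** B) = A ** B \<and> transpose (B ** A) = B ** A)"

definition spec_norm :: "real^'m^'n \<Rightarrow> real" where
  "spec_norm A = onorm (\<lambda>z. A *v z)"

definition largest_singular_value :: "real^'m^'n \<Rightarrow> real" where
  "largest_singular_value A =
     sqrt (Max {l. \<exists>z. z \<noteq> 0 \<and> (transpose A ** A) *v z = l *\<^sub>R z})"

definition outer :: "real^'n \<Rightarrow> real^'m \<Rightarrow> real^'m^'n" where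
  "outer u v = (\<chi> a b. u $ a * v $ b)"

end

theory Submission
  imports Defs
begin

(* Write x = P + h, where P = M\<^sup>T M x projects x onto the span of the first n right
   singular vectors; since M has orthonormal rows, M\<^sup>+ = M\<^sup>T and M is a contraction.
   The mean value inequality for s \<mapsto> M g(P + s h, W(P + s h)) bounds the alignment error
   by |M Jx h + M Jy W h| at an intermediate point x'. As h is orthogonal to v_0, ..., v_(n-1)
   (indices start at 0, so \<sigma> n is the paper's \<sigma>_(n+1)), the SVD gives
   |W h| \<le> \<sigma> n |h| \<le> \<sigma> n |x|. The second bound uses |A z| \<le> \<sigma>_1(A) |z|, which holds
   because the maximum of |A z|\<^sup>2 on the unit sphere is an eigenvalue of A\<^sup>T A. *)

lemma inner_sum_scaleR_orthonormal:
  fixes w :: "'i \<Rightarrow> 'a::real_inner"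
  assumes "finite K"
    and orthonormal: "\<And>i j. i \<in> K \<Longrightarrow> j \<in> K \<Longrightarrow> w i \<bullet> w j = (if i = j then 1 else 0)"
  shows "(\<Sum>k\<in>K. a k *\<^sub>R w k) \<bullet> (\<Sum>k\<in>K. b k *\<^sub>R w k) = (\<Sum>k\<in>K. a k * b k)"
proof -
  have "(\<Sum>k\<in>K. a k *\<^sub>R w k) \<bullet> (\<Sum>k\<in>K. b k *\<^sub>R w k)
      = (\<Sum>j\<in>K. \<Sum>i\<in>K. a i * b j * (w i \<bullet> w j))"
    by (simp add: inner_sum_left inner_sum_right sum_distrib_left ac_simps)
  also have "\<dots> = (\<Sum>j\<in>K. \<Sum>i\<in>K. if i = j then a i * b j else 0)"
    by (intro sum.cong refl) (simp add: orthonormal)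
  also have "\<dots> = (\<Sum>k\<in>K. a k * b k)"
    using \<open>finite K\<close> by (simp add: sum.delta')
  finally show ?thesis .
qed

lemma bessel_inequality:
  fixes w :: "'i \<Rightarrow> 'a::real_inner"
  assumes "finite K"
    and "\<And>i j. i \<in> K \<Longrightarrow> j \<in> K \<Longrightarrow> w i \<bullet> w j = (if i = j then 1 else 0)"
  shows "(\<Sum>k\<in>K. (w k \<bullet> z)\<^sup>2) \<le> (norm z)\<^sup>2"
proof -
  define p where "p = (\<Sum>k\<in>K. (w k \<bullet> z) *\<^sub>R w k)"
  have pp: "p \<bullet> p = (\<Sum>k\<in>K. (w k \<bullet> z)\<^sup>2)"
    unfolding p_def by (simp add: inner_sum_scaleR_orthonormal[OF assms] power2_eq_square)
  have pz: "p \<bullet> z = (\<Sum>k\<in>K. (w k \<bullet> z)\<^sup>2)"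
    unfolding p_def by (simp add: inner_sum_left power2_eq_square)
  have "0 \<le> (z - p) \<bullet> (z - p)" by simp
  also have "\<dots> = z \<bullet> z - 2 * (p \<bullet> z) + p \<bullet> p" by (simp add: algebra_simps inner_commute)
  finally show ?thesis using pp pz by (simp add: power2_norm_eq_inner)
qed

lemma quadratic_nonpos_imp_linear_coeff_eq_0:
  fixes c d :: real
  assumes "\<And>t. 2 * t * c + t\<^sup>2 * d \<le> 0"
  shows "c = 0"
proof -
  define r where "r = \<bar>d\<bar> + 1"
  have r: "r > 0" "d + 2 * r > 0" by (auto simp: r_def)
  have "2 * (c / r) * c + (c / r)\<^sup>2 * d \<le> 0" by (rule assms)
  then have "c\<^sup>2 * (d + 2 * r) \<le> 0"
    using r by (simp add: field_simps power2_eq_square)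
  then show "c = 0" using r by (simp add: mult_le_0_iff)
qed

lemma eigenvector_if_attains_norm_bound:
  fixes A :: "real^'m^'k"
  assumes bound: "\<And>y. (norm (A *v y))\<^sup>2 \<le> \<mu> * (norm y)\<^sup>2"
    and attains: "(norm (A *v z))\<^sup>2 = \<mu> * (norm z)\<^sup>2"
  shows "(transpose A ** A) *v z = \<mu> *\<^sub>R z"
proof -
  have "(A *v z) \<bullet> (A *v w) - \<mu> * (z \<bullet> w) = 0" for w
  proof (rule quadratic_nonpos_imp_linear_coeff_eq_0)
    fix t
    have "(norm (A *v (z + t *\<^sub>R w)))\<^sup>2 \<le> \<mu> * (norm (z + t *\<^sub>R w))\<^sup>2" by (rule bound)
    then have "(A *v z + t *\<^sub>R (A *v w)) \<bullet> (A *v z + t *\<^sub>R (A *v w))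
        \<le> \<mu> * ((z + t *\<^sub>R w) \<bullet> (z + t *\<^sub>R w))"
      by (simp add: power2_norm_eq_inner matrix_vector_right_distrib matrix_vector_mult_scaleR)
    moreover have "(A *v z) \<bullet> (A *v z) = \<mu> * (z \<bullet> z)"
      using attains by (simp add: power2_norm_eq_inner)
    ultimately show "2 * t * ((A *v z) \<bullet> (A *v w) - \<mu> * (z \<bullet> w))
        + t\<^sup>2 * ((A *v w) \<bullet> (A *v w) - \<mu> * (w \<bullet> w)) \<le> 0"
      by (simp add: inner_add_left inner_add_right inner_commute power2_eq_square algebra_simps)
  qed
  then have "((transpose A ** A) *v z - \<mu> *\<^sub>R z) \<bullet> w = 0" for w
    by (simp add: inner_diff_left matrix_vector_mul_assoc[symmetric] dot_lmul_matrix)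
  then show ?thesis by (metis inner_eq_zero_iff right_minus_eq)
qed

lemma norm_matrix_vector_bound_by_eigenvalue:
  fixes A :: "real^'m^'k"
  obtains \<mu> z where "z \<noteq> 0" "(transpose A ** A) *v z = \<mu> *\<^sub>R z"
    and "\<And>y. (norm (A *v y))\<^sup>2 \<le> \<mu> * (norm y)\<^sup>2"
proof -
  obtain z1 :: "real^'m" where "norm z1 = 1" using vector_choose_size[of 1] by auto
  then have "sphere (0::real^'m) 1 \<noteq> {}" by auto
  moreover have "continuous_on (sphere 0 1) (\<lambda>y. (norm (A *v y))\<^sup>2)"
    by (intro continuous_intros linear_continuous_on bounded_linear_intros)
  ultimately have "\<exists>z\<in>sphere 0 1. \<forall>y\<in>sphere 0 1. (norm (A *v y))\<^sup>2 \<le> (norm (A *v z))\<^sup>2"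
    by (intro continuous_attains_sup compact_sphere)
  then obtain z where z: "norm z = 1"
    and max: "\<And>y. norm y = 1 \<Longrightarrow> (norm (A *v y))\<^sup>2 \<le> (norm (A *v z))\<^sup>2"
    by auto
  define \<mu> where "\<mu> = (norm (A *v z))\<^sup>2"
  have bound: "(norm (A *v y))\<^sup>2 \<le> \<mu> * (norm y)\<^sup>2" for y
  proof (cases "y = 0")
    case False
    have "(norm (A *v (inverse (norm y) *\<^sub>R y)))\<^sup>2 \<le> \<mu>"
      unfolding \<mu>_def using False by (intro max) simp
    then show ?thesis
      using False by (simp add: matrix_vector_mult_scaleR power_inverse field_simps)
  qed simp
  moreover have "(transpose A ** A) *v z = \<mu> *\<^sub>R z"
    using bound z by (intro eigenvector_if_attains_norm_bound) (simp_all add: \<mu>_def)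
  ultimately show thesis using z by (intro that) auto
qed

lemma finite_eigenvalues_symmetric_matrix:
  fixes S :: "real^'n^'n"
  assumes "transpose S = S"
  shows "finite {l. \<exists>z. z \<noteq> 0 \<and> S *v z = l *\<^sub>R z}" (is "finite ?L")
proof -
  have "\<exists>ev. \<forall>l\<in>?L. ev l \<noteq> 0 \<and> S *v ev l = l *\<^sub>R ev l"
    by (rule bchoice) blast
  then obtain ev where ev: "\<And>l. l \<in> ?L \<Longrightarrow> ev l \<noteq> 0 \<and> S *v ev l = l *\<^sub>R ev l"
    by blast
  have self_adjoint: "(S *v a) \<bullet> b = a \<bullet> (S *v b)" for a b
    using dot_lmul_matrix[of a S b] assms transpose_matrix_vector[of S a] by simp
  have eigen_orthogonal: "ev l \<bullet> ev l' = 0" if "l \<in> ?L" "l' \<in> ?L" "l \<noteq> l'" for l l'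
  proof -
    have "l * (ev l \<bullet> ev l') = l' * (ev l \<bullet> ev l')"
      using self_adjoint[of "ev l" "ev l'"] ev[OF that(1)] ev[OF that(2)] by simp
    then show ?thesis using \<open>l \<noteq> l'\<close> by simp
  qed
  have "inj_on ev ?L"
  proof (rule inj_onI, rule ccontr)
    fix l l' assume "l \<in> ?L" "l' \<in> ?L" "ev l = ev l'" "l \<noteq> l'"
    then have "ev l \<bullet> ev l' = 0" by (intro eigen_orthogonal)
    then have "ev l \<bullet> ev l = 0" using \<open>ev l = ev l'\<close> by simp
    then show False using ev[OF \<open>l \<in> ?L\<close>] by simp
  qed
  moreover have "independent (ev ` ?L)"
  proof (rule pairwise_orthogonal_independent)
    show "pairwise orthogonal (ev ` ?L)"
      using eigen_orthogonal by (auto simp: pairwise_def orthogonal_def)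
    show "0 \<notin> ev ` ?L"
      using ev by force
  qed
  ultimately show ?thesis
    using independent_bound finite_imageD by blast
qed

lemma norm_matrix_vector_le_largest_singular_value:
  fixes A :: "real^'m^'k"
  shows "norm (A *v z) \<le> largest_singular_value A * norm z"
proof -
  obtain \<mu> y where "y \<noteq> 0" "(transpose A ** A) *v y = \<mu> *\<^sub>R y"
    and bound: "\<And>z. (norm (A *v z))\<^sup>2 \<le> \<mu> * (norm z)\<^sup>2"
    using norm_matrix_vector_bound_by_eigenvalue[of A] by blast
  then have "\<mu> \<le> Max {l. \<exists>z. z \<noteq> 0 \<and> (transpose A ** A) *v z = l *\<^sub>R z}"
    by (intro Max_ge finite_eigenvalues_symmetric_matrix) (auto simp: matrix_transpose_mul)
  then have "sqrt \<mu> \<le> largest_singular_value A"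
    by (simp add: largest_singular_value_def)
  have "norm (A *v z) \<le> sqrt (\<mu> * (norm z)\<^sup>2)"
    using bound[of z] by (simp add: real_le_rsqrt)
  also have "\<dots> = sqrt \<mu> * norm z"
    by (simp add: real_sqrt_mult)
  also have "\<dots> \<le> largest_singular_value A * norm z"
    using \<open>sqrt \<mu> \<le> largest_singular_value A\<close> by (rule mult_right_mono) simp
  finally show ?thesis .
qed

lemma largest_singular_value_nonneg: "0 \<le> largest_singular_value (A :: real^'m^'k)"
proof -
  obtain z :: "real^'m" where "norm z = 1" using vector_choose_size[of 1] by auto
  then have "norm (A *v z) \<le> largest_singular_value A"
    using norm_matrix_vector_le_largest_singular_value[of A z] by simp
  then show ?thesis
    by (rule order_trans[OF norm_ge_zero])
qed

lemma pinv_eqI: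
  fixes A :: "real^'m^'n"
  assumes "A ** B ** A = A" "B ** A ** B = B"
    and "transpose (A ** B) = A ** B" "transpose (B ** A) = B ** A"
  shows "pinv A = B"
  unfolding pinv_def
proof (rule the_equality)
  fix C
  assume "A ** C ** A = A \<and> C ** A ** C = C \<and> transpose (A ** C) = A ** C \<and> transpose (C ** A) = C ** A"
  then show "C = B"
    using assms by (metis matrix_transpose_mul matrix_mul_assoc)
qed (use assms in blast)

lemma
  fixes M :: "real^'m^'k"
  assumes "M ** transpose M = mat 1"
  shows norm_transpose_matrix_vector_orthonormal_rows: "norm (transpose M *v y) = norm y"
    and matrix_vector_mul_projection_residual: "M *v (z - transpose M *v (M *v z)) = 0"
proof -
  have "(transpose M *v y) \<bullet> (transpose M *v y) = y \<bullet> (M *v (transpose M *v y))"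
    by (metis dot_lmul_matrix transpose_matrix_vector)
  also have "\<dots> = y \<bullet> y"
    using assms by (simp add: matrix_vector_mul_assoc del: transpose_matrix_vector)
  finally have "(transpose M *v y) \<bullet> (transpose M *v y) = y \<bullet> y" .
  then show "norm (transpose M *v y) = norm y"
    by (simp add: norm_eq_sqrt_inner)
  show "M *v (z - transpose M *v (M *v z)) = 0"
    using assms
    by (simp add: matrix_vector_mult_diff_distrib matrix_vector_mul_assoc matrix_mul_assoc)
qed

lemma
  fixes M :: "real^'m^'k"
  assumes "M ** transpose M = mat 1"
  shows norm_projection_le: "norm (transpose M *v (M *v z)) \<le> norm z"
    and norm_projection_residual_le: "norm (z - transpose M *v (M *v z)) \<le> norm z"
proof -
  define p where "p = transpose M *v (M *v z)"
  have "p \<bullet> (z - p) = 0"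
    unfolding p_def using matrix_vector_mul_projection_residual[OF assms]
    by (simp add: dot_lmul_matrix)
  then have "(norm (p + (z - p)))\<^sup>2 = (norm p)\<^sup>2 + (norm (z - p))\<^sup>2"
    by (intro norm_add_Pythagorean) (simp add: orthogonal_def)
  then have "(norm p)\<^sup>2 \<le> (norm z)\<^sup>2 \<and> (norm (z - p))\<^sup>2 \<le> (norm z)\<^sup>2"
    by simp
  then show "norm p \<le> norm z" "norm (z - p) \<le> norm z"
    by (simp_all add: power2_le_iff_abs_le)
qed

lemma norm_matrix_vector_le_orthonormal_rows:
  fixes M :: "real^'m^'k"
  assumes "M ** transpose M = mat 1"
  shows "norm (M *v z) \<le> norm z"
  using norm_projection_le[OF assms] norm_transpose_matrix_vector_orthonormal_rows[OF assms]
  by metis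

lemma spec_norm_orthonormal_rows_mult_le:
  fixes M :: "real^'m^'k" and A :: "real^'l^'m"
  assumes "M ** transpose M = mat 1"
  shows "spec_norm (M ** A) \<le> largest_singular_value A"
  unfolding spec_norm_def
proof (rule onorm_le)
  fix z
  have "norm ((M ** A) *v z) \<le> norm (A *v z)"
    using norm_matrix_vector_le_orthonormal_rows[OF assms]
    by (simp add: matrix_vector_mul_assoc[symmetric])
  also have "\<dots> \<le> largest_singular_value A * norm z"
    by (rule norm_matrix_vector_le_largest_singular_value)
  finally show "norm ((M ** A) *v z) \<le> largest_singular_value A * norm z" .
qed

lemma pinv_orthonormal_rows:
  fixes M :: "real^'m^'k"
  assumes "M ** transpose M = mat 1"
  shows "pinv M = transpose M"
  using assms by (intro pinv_eqI) (simp_all add: matrix_mul_assoc[symmetric] matrix_transpose_mul)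

lemma
  fixes v :: "nat \<Rightarrow> real^'m" and e :: "'k::finite \<Rightarrow> nat"
  defines "M \<equiv> \<chi> k j. v (e k) $ j"
  assumes v_orth: "\<And>i j. i < N \<Longrightarrow> j < N \<Longrightarrow> v i \<bullet> v j = (if i = j then 1 else 0)"
    and e_bij: "bij_betw e UNIV {..<n}" and "n \<le> N"
  shows row_selection_orthonormal_rows: "M ** transpose M = mat 1"
    and row_selection_residual_orthogonal: "i < n \<Longrightarrow> v i \<bullet> (z - transpose M *v (M *v z)) = 0"
proof -
  have row: "M $ k = v (e k)" for k
    by (simp add: M_def vec_eq_iff)
  have e_lt: "e k < n" for k
    using e_bij by (auto simp: bij_betw_def)
  have "v (e k) \<bullet> v (e l) = (if k = l then 1 else 0)" for k l
    using v_orth[of "e k" "e l"] e_lt[of k] e_lt[of l] \<open>n \<le> N\<close> bij_betw_imp_inj_on[OF e_bij]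
    by (auto simp: inj_eq)
  then show MMt: "M ** transpose M = mat 1"
    by (simp add: matrix_mult_transpose_dot_row vec_eq_iff row_def row mat_def)
  assume "i < n"
  then have "i \<in> range e"
    using e_bij by (simp add: bij_betw_def)
  then obtain k where "i = e k" by blast
  then show "v i \<bullet> (z - transpose M *v (M *v z)) = 0"
    using matrix_vector_mul_projection_residual[OF MMt, of z]
    by (simp add: vec_eq_iff matrix_vector_mul_component row)
qed

lemma outer_sum_matrix_vector:
  "(\<Sum>i<K. s i *\<^sub>R outer (u i) (v i)) *v z = (\<Sum>i<K. (s i * (v i \<bullet> z)) *\<^sub>R u i)"
  by (simp add: vec_eq_iff matrix_vector_mult_def outer_def inner_vec_def sum_distrib_left
      sum_distrib_right sum_component ac_simps sum.swap[of _ UNIV])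

lemma norm_svd_tail_le:
  fixes u :: "nat \<Rightarrow> real^'k" and v :: "nat \<Rightarrow> real^'m"
  assumes u_orth: "\<And>i j. i < K \<Longrightarrow> j < K \<Longrightarrow> u i \<bullet> u j = (if i = j then 1 else 0)"
    and v_orth: "\<And>i j. i < K \<Longrightarrow> j < K \<Longrightarrow> v i \<bullet> v j = (if i = j then 1 else 0)"
    and sigma_nonneg: "\<And>i. i < K \<Longrightarrow> 0 \<le> \<sigma> i"
    and sigma_mono: "\<And>i j. i \<le> j \<Longrightarrow> j < K \<Longrightarrow> \<sigma> j \<le> \<sigma> i"
    and "n < K"
    and h_orth: "\<And>i. i < n \<Longrightarrow> v i \<bullet> h = 0"
  shows "norm ((\<Sum>i<K. \<sigma> i *\<^sub>R outer (u i) (v i)) *v h) \<le> \<sigma> n * norm h"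
proof -
  have "(norm ((\<Sum>i<K. \<sigma> i *\<^sub>R outer (u i) (v i)) *v h))\<^sup>2
      = (\<Sum>i<K. (\<sigma> i * (v i \<bullet> h)) * (\<sigma> i * (v i \<bullet> h)))"
    unfolding outer_sum_matrix_vector power2_norm_eq_inner
    by (rule inner_sum_scaleR_orthonormal) (auto simp: u_orth)
  also have "\<dots> \<le> (\<Sum>i<K. (\<sigma> n)\<^sup>2 * (v i \<bullet> h)\<^sup>2)"
  proof (rule sum_mono)
    fix i assume "i \<in> {..<K}"
    show "(\<sigma> i * (v i \<bullet> h)) * (\<sigma> i * (v i \<bullet> h)) \<le> (\<sigma> n)\<^sup>2 * (v i \<bullet> h)\<^sup>2"
    proof (cases "i < n")
      case False
      then have "(\<sigma> i)\<^sup>2 \<le> (\<sigma> n)\<^sup>2"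
        using \<open>i \<in> {..<K}\<close> by (intro power_mono sigma_mono sigma_nonneg) auto
      then show ?thesis
        by (simp add: power2_eq_square[symmetric] power_mult_distrib mult_right_mono)
    qed (simp add: h_orth)
  qed
  also have "\<dots> = (\<sigma> n)\<^sup>2 * (\<Sum>i<K. (v i \<bullet> h)\<^sup>2)"
    by (simp add: sum_distrib_left)
  also have "\<dots> \<le> (\<sigma> n)\<^sup>2 * (norm h)\<^sup>2"
    using bessel_inequality[of "{..<K}" v h] v_orth by (intro mult_left_mono) auto
  finally show ?thesis
    using sigma_nonneg[OF \<open>n < K\<close>] by (simp add: power2_le_iff_abs_le power_mult_distrib[symmetric])
qed

lemma mean_value_bound_on_segment:
  fixes g :: "real^'a \<Rightarrow> real^'b \<Rightarrow> real^'c" and W :: "real^'a^'b" and M :: "real^'c^'d"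
    and Jx :: "real^'a \<Rightarrow> real^'b \<Rightarrow> real^'a^'c" and Jy :: "real^'a \<Rightarrow> real^'b \<Rightarrow> real^'b^'c"
  assumes g_deriv: "\<And>x y. ((\<lambda>(a, b). g a b) has_derivative
                          (\<lambda>(h, k). Jx x y *v h + Jy x y *v k)) (at (x, y))"
  shows "\<exists>q\<in>closed_segment a b. norm (M *v g b (W *v b) - M *v g a (W *v a))
           \<le> norm (M *v (Jx q (W *v q) *v (b - a)) + (M ** Jy q (W *v q)) *v (W *v (b - a)))"
proof -
  define \<gamma> where "\<gamma> s = a + s *\<^sub>R (b - a)" for s :: real
  define F where "F s = M *v g (\<gamma> s) (W *v \<gamma> s)" for s
  define F' where "F' s t = M *v (Jx (\<gamma> s) (W *v \<gamma> s) *v (t *\<^sub>R (b - a))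
                              + Jy (\<gamma> s) (W *v \<gamma> s) *v (W *v (t *\<^sub>R (b - a))))" for s t :: real
  have dF: "(F has_derivative F' s) (at s)" for s
  proof -
    have "(\<gamma> has_derivative (\<lambda>t. t *\<^sub>R (b - a))) (at s)"
      unfolding \<gamma>_def by (auto intro!: derivative_eq_intros)
    then have "((\<lambda>s. (\<gamma> s, W *v \<gamma> s)) has_derivative (\<lambda>t. (t *\<^sub>R (b - a), W *v (t *\<^sub>R (b - a))))) (at s)"
      by (intro has_derivative_Pair bounded_linear.has_derivative[OF matrix_vector_mul_bounded_linear])
    from bounded_linear.has_derivative[OF matrix_vector_mul_bounded_linear[of M] diff_chain_at[OF this g_deriv]]
    show ?thesis
      unfolding F_def F'_def by (simp add: o_def)
  qed
  then have "continuous_on {0..1} F"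
    by (meson continuous_at_imp_continuous_on has_derivative_continuous)
  then obtain s where s: "s \<in> {0<..<1}" and mvt: "norm (F 1 - F 0) \<le> norm (F' s (1 - 0))"
    using mvt_general[of 0 1 F F'] dF by auto
  have "\<gamma> s \<in> closed_segment a b"
    using s unfolding in_segment \<gamma>_def by (intro exI[of _ s]) (auto simp: algebra_simps)
  moreover have "F' s (1 - 0) = M *v (Jx (\<gamma> s) (W *v \<gamma> s) *v (b - a))
      + (M ** Jy (\<gamma> s) (W *v \<gamma> s)) *v (W *v (b - a))"
    by (simp add: F'_def matrix_vector_right_distrib matrix_vector_mul_assoc matrix_mul_assoc)
  ultimately show ?thesis
    using mvt by (auto simp: F_def \<gamma>_def)
qed

lemma projected_increment_bound:
  fixes g :: "real^'a \<Rightarrow> real^'b \<Rightarrow> real^'a" and W :: "real^'a^'b" and M :: "real^'a^'d"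
    and Jx :: "real^'a \<Rightarrow> real^'b \<Rightarrow> real^'a^'a" and Jy :: "real^'a \<Rightarrow> real^'b \<Rightarrow> real^'b^'a"
    and x :: "real^'a"
  defines "P \<equiv> transpose M *v (M *v x)"
  assumes MMt: "M ** transpose M = mat 1"
    and g_deriv: "\<And>x y. ((\<lambda>(a, b). g a b) has_derivative
                          (\<lambda>(h, k). Jx x y *v h + Jy x y *v k)) (at (x, y))"
    and W_residual: "norm (W *v (x - P)) \<le> c * norm x" and "0 \<le> c"
  shows "\<exists>x'\<in>closed_segment x P. let y' = W *v x' in
           norm (M *v g x (W *v x) - M *v g P (W *v P))
             \<le> norm (M *v (Jx x' y' *v (x - P))) + c * spec_norm (M ** Jy x' y') * norm x
         \<and> norm (M *v (Jx x' y' *v (x - P))) + c * spec_norm (M ** Jy x' y') * norm x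
             \<le> (largest_singular_value (Jx x' y') + c * largest_singular_value (Jy x' y')) * norm x"
proof -
  obtain x' where x': "x' \<in> closed_segment P x"
    and mvt: "norm (M *v g x (W *v x) - M *v g P (W *v P))
      \<le> norm (M *v (Jx x' (W *v x') *v (x - P)) + (M ** Jy x' (W *v x')) *v (W *v (x - P)))"
    using mean_value_bound_on_segment[OF g_deriv, where a = P and b = x and W = W and M = M]
    by blast
  define y' where "y' = W *v x'"
  have residual: "norm (x - P) \<le> norm x"
    unfolding P_def by (rule norm_projection_residual_le[OF MMt])
  have spec_norm_nonneg: "0 \<le> spec_norm (M ** Jy x' y')"
    unfolding spec_norm_def by (rule onorm_pos_le[OF matrix_vector_mul_bounded_linear])
  have "norm ((M ** Jy x' y') *v (W *v (x - P))) \<le> spec_norm (M ** Jy x' y') * norm (W *v (x - P))"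
    unfolding spec_norm_def by (rule onorm[OF matrix_vector_mul_bounded_linear])
  also have "\<dots> \<le> spec_norm (M ** Jy x' y') * (c * norm x)"
    using W_residual spec_norm_nonneg by (rule mult_left_mono)
  finally have Jy_term: "norm ((M ** Jy x' y') *v (W *v (x - P))) \<le> c * spec_norm (M ** Jy x' y') * norm x"
    by (simp add: ac_simps)
  have "norm (M *v (Jx x' y' *v (x - P))) \<le> largest_singular_value (Jx x' y') * norm x"
    using norm_matrix_vector_le_orthonormal_rows[OF MMt]
      norm_matrix_vector_le_largest_singular_value[of "Jx x' y'" "x - P"]
      mult_left_mono[OF residual largest_singular_value_nonneg]
    by (meson order_trans)
  moreover have "c * spec_norm (M ** Jy x' y') * norm x \<le> c * largest_singular_value (Jy x' y') * norm x"
    using spec_norm_orthonormal_rows_mult_le[OF MMt] \<open>0 \<le> c\<close>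
    by (intro mult_right_mono mult_left_mono) auto
  moreover have "norm (M *v g x (W *v x) - M *v g P (W *v P))
      \<le> norm (M *v (Jx x' y' *v (x - P))) + c * spec_norm (M ** Jy x' y') * norm x"
    using mvt norm_triangle_ineq Jy_term unfolding y'_def by (meson add_left_mono order_trans)
  ultimately show ?thesis
    using x' unfolding Let_def y'_def by (auto simp: closed_segment_commute distrib_right)
qed

theorem theoremS59:
  fixes W :: "real^'N^'N"
    and u v :: "nat \<Rightarrow> real^'N"
    and \<sigma> :: "nat \<Rightarrow> real"
    and e :: "'n::finite \<Rightarrow> nat"
    and g :: "real^'N \<Rightarrow> real^'N \<Rightarrow> real^'N"
    and Jx Jy :: "real^'N \<Rightarrow> real^'N \<Rightarrow> real^'N^'N"
    and M :: "real^'N^'n"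
    and E :: "real^'N \<Rightarrow> real"
    and x :: "real^'N"
  assumes u_orth: "\<And>i j. i < CARD('N) \<Longrightarrow> j < CARD('N) \<Longrightarrow> u i \<bullet> u j = (if i = j then 1 else 0)"
    and v_orth: "\<And>i j. i < CARD('N) \<Longrightarrow> j < CARD('N) \<Longrightarrow> v i \<bullet> v j = (if i = j then 1 else 0)"
    and sigma_nonneg: "\<And>i. i < CARD('N) \<Longrightarrow> 0 \<le> \<sigma> i"
    and sigma_mono: "\<And>i j. i \<le> j \<Longrightarrow> j < CARD('N) \<Longrightarrow> \<sigma> j \<le> \<sigma> i"
    and svd: "W = (\<Sum>i<CARD('N). \<sigma> i *\<^sub>R outer (u i) (v i))"
    and n_lt: "CARD('n) < CARD('N)"
    and e_bij: "bij_betw e UNIV {..<CARD('n)}"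
    and M_def: "M = (\<chi> k j. v (e k) $ j)"
    and g_deriv: "\<And>x y. ((\<lambda>(a, b). g a b) has_derivative
                          (\<lambda>(h, k). Jx x y *v h + Jy x y *v k)) (at (x, y))"
    and Jx_cont: "continuous_on UNIV (\<lambda>(x, y). Jx x y)"
    and Jy_cont: "continuous_on UNIV (\<lambda>(x, y). Jy x y)"
    and E_def: "\<And>z. E z = 1 / sqrt (real CARD('n)) *
                  norm (M *v g z (W *v z) -
                        M *v g (pinv M *v (M *v z)) (W *v (pinv M *v (M *v z))))"
  shows "\<exists>x'. x' \<in> closed_segment x (transpose M *v (M *v x)) \<and>
           (let y' = W *v x' in
              E x \<le> 1 / sqrt (real CARD('n)) *
                      (norm (M *v (Jx x' y' *v (x - transpose M *v (M *v x))))
                       + \<sigma> CARD('n) * spec_norm (M ** Jy x' y') * norm x)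
            \<and> (x \<noteq> 0 \<longrightarrow>
                 E x / norm x \<le> 1 / sqrt (real CARD('n)) *
                   (largest_singular_value (Jx x' y')
                    + \<sigma> CARD('n) * largest_singular_value (Jy x' y'))))"
proof -
  let ?n = "CARD('n)" and ?P = "transpose M *v (M *v x)"
  have MMt: "M ** transpose M = mat 1"
    unfolding M_def by (rule row_selection_orthonormal_rows[OF v_orth e_bij less_imp_le[OF n_lt]])
  have residual_orth: "v i \<bullet> (x - ?P) = 0" if "i < ?n" for i
    unfolding M_def
    by (rule row_selection_residual_orthogonal[OF v_orth e_bij less_imp_le[OF n_lt] that])
  have "norm (W *v (x - ?P)) \<le> \<sigma> ?n * norm (x - ?P)"
    unfolding svd by (rule norm_svd_tail_le[OF u_orth v_orth sigma_nonneg sigma_mono n_lt residual_orth])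
  also have "\<dots> \<le> \<sigma> ?n * norm x"
    using norm_projection_residual_le[OF MMt] sigma_nonneg n_lt by (intro mult_left_mono) auto
  finally have "\<exists>x'\<in>closed_segment x ?P. let y' = W *v x' in
      norm (M *v g x (W *v x) - M *v g ?P (W *v ?P))
        \<le> norm (M *v (Jx x' y' *v (x - ?P))) + \<sigma> ?n * spec_norm (M ** Jy x' y') * norm x
    \<and> norm (M *v (Jx x' y' *v (x - ?P))) + \<sigma> ?n * spec_norm (M ** Jy x' y') * norm x
        \<le> (largest_singular_value (Jx x' y') + \<sigma> ?n * largest_singular_value (Jy x' y')) * norm x"
    by (rule projected_increment_bound[OF MMt g_deriv _ sigma_nonneg[OF n_lt]])
  moreover have "E x = 1 / sqrt (real ?n) * norm (M *v g x (W *v x) - M *v g ?P (W *v ?P))"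
    by (simp add: E_def pinv_orthonormal_rows[OF MMt])
  ultimately show ?thesis
    unfolding Let_def by (auto simp: pos_divide_le_eq)
qed

end
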